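(* Let $k\ge1$. For every $\mathcal{C}_k$-algebra $(A,t)$: (i) every cyclic deductive system of $A$ is an intersection of maximal cyclic deductive systems of $A$; (ii) the intersection of all maximal cyclic deductive systems of $A$ equals $\{1\}$. Consequently, (iii) the variety of $\mathcal{C}_k$-algebras is semisimple (every subdirectly irreducible member is simple).
   Context: A modal pseudocomplemented De Morgan algebra ($mpM$-algebra) is an algebra $\langle A,\wedge,\vee,\sim,{}^\ast,0,1\rangle$ such that $\langle A,\wedge,\vee,\sim,0,1\rangle$ is a De Morgan algebra (bounded distributive lattice with $\sim\sim x=x$, $\sim(x\vee y)=\sim x\wedge\sim y$), $x^\ast$ is the pseudocomplement of $x$, and $x\vee\sim x\le x\vee x^\ast$. Put $\nabla x=\sim(\sim x\wedge x^\ast)$, $\triangle x=\sim\nabla\sim x$. A $\mathcal{C}_k$-algebra ($k\ge1$) is a pair $(A,t)$ with $A$ an $mpM$-algebra and $t$ an $mpM$-automorphism of $A$ with $t^k=\mathrm{id}$; these form a variety in the signature $(\wedge,\vee,\sim,{}^\ast,t,0,1)$. The cyclic implication is $a\rightharpoondown b=\bigvee_{i=1}^{k}\nabla(\sim t^i(a))\vee b$. A cyclic deductive system is a set $D\subseteq A$ with $1\in D$ such that $x,\,x\rightharpoondown y\in D$ imply $y\in D$; it is maximal if it is maximal among proper cyclic deductive systems. *)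

theory Defs
  imports Main
begin

text \<open>An algebra of signature (meet, join, neg, pc, t, zero, one) whose carrier is the
whole type 'a.\<close>

record 'a ck_algebra =
  meet :: "'a \<Rightarrow> 'a \<Rightarrow> 'a"
  join :: "'a \<Rightarrow> 'a \<Rightarrow> 'a"
  neg  :: "'a \<Rightarrow> 'a"
  pc   :: "'a \<Rightarrow> 'a"
  tr   :: "'a \<Rightarrow> 'a"
  zero :: 'a
  one  :: 'a

definition leq :: "'a ck_algebra \<Rightarrow> 'a \<Rightarrow> 'a \<Rightarrow> bool" where
  "leq A x y \<longleftrightarrow> meet A x y = x"

definition bdl :: "'a ck_algebra \<Rightarrow> bool" where
  "bdl A \<longleftrightarrow>
     (\<forall>x y z. meet A (meet A x y) z = meet A x (meet A y z)) \<and>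
     (\<forall>x y z. join A (join A x y) z = join A x (join A y z)) \<and>
     (\<forall>x y. meet A x y = meet A y x) \<and>
     (\<forall>x y. join A x y = join A y x) \<and>
     (\<forall>x y. meet A x (join A x y) = x) \<and>
     (\<forall>x y. join A x (meet A x y) = x) \<and>
     (\<forall>x y z. meet A x (join A y z) = join A (meet A x y) (meet A x z)) \<and>
     (\<forall>x. join A x (zero A) = x) \<and>
     (\<forall>x. meet A x (one A) = x)"

definition de_morgan_alg :: "'a ck_algebra \<Rightarrow> bool" where
  "de_morgan_alg A \<longleftrightarrow> bdl A \<and>
     (\<forall>x. neg A (neg A x) = x) \<and>
     (\<forall>x y. neg A (join A x y) = meet A (neg A x) (neg A y))"

definition is_pseudocomplement :: "'a ck_algebra \<Rightarrow> bool" where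
  "is_pseudocomplement A \<longleftrightarrow>
     (\<forall>x. meet A x (pc A x) = zero A \<and> (\<forall>y. meet A x y = zero A \<longrightarrow> leq A y (pc A x)))"

definition mpM_alg :: "'a ck_algebra \<Rightarrow> bool" where
  "mpM_alg A \<longleftrightarrow> de_morgan_alg A \<and> is_pseudocomplement A \<and>
     (\<forall>x. leq A (join A x (neg A x)) (join A x (pc A x)))"

definition mpM_automorphism :: "'a ck_algebra \<Rightarrow> ('a \<Rightarrow> 'a) \<Rightarrow> bool" where
  "mpM_automorphism A f \<longleftrightarrow> bij f \<and>
     (\<forall>x y. f (meet A x y) = meet A (f x) (f y)) \<and>
     (\<forall>x y. f (join A x y) = join A (f x) (f y)) \<and>
     (\<forall>x. f (neg A x) = neg A (f x)) \<and>
     (\<forall>x. f (pc A x) = pc A (f x)) \<and>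
     f (zero A) = zero A \<and> f (one A) = one A"

definition Ck_alg :: "nat \<Rightarrow> 'a ck_algebra \<Rightarrow> bool" where
  "Ck_alg k A \<longleftrightarrow> mpM_alg A \<and> mpM_automorphism A (tr A) \<and> (tr A ^^ k) = id"

definition nabla :: "'a ck_algebra \<Rightarrow> 'a \<Rightarrow> 'a" where
  "nabla A x = neg A (meet A (neg A x) (pc A x))"

definition bigjoin :: "'a ck_algebra \<Rightarrow> 'a list \<Rightarrow> 'a" where
  "bigjoin A xs = foldr (join A) xs (zero A)"

definition cimp :: "nat \<Rightarrow> 'a ck_algebra \<Rightarrow> 'a \<Rightarrow> 'a \<Rightarrow> 'a" where
  "cimp k A a b = join A (bigjoin A (map (\<lambda>i. nabla A (neg A ((tr A ^^ i) a))) [1..<Suc k])) b"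

definition cyclic_ds :: "nat \<Rightarrow> 'a ck_algebra \<Rightarrow> 'a set \<Rightarrow> bool" where
  "cyclic_ds k A D \<longleftrightarrow> one A \<in> D \<and> (\<forall>x y. x \<in> D \<longrightarrow> cimp k A x y \<in> D \<longrightarrow> y \<in> D)"

definition maximal_cyclic_ds :: "nat \<Rightarrow> 'a ck_algebra \<Rightarrow> 'a set \<Rightarrow> bool" where
  "maximal_cyclic_ds k A M \<longleftrightarrow> cyclic_ds k A M \<and> M \<noteq> UNIV \<and>
     (\<forall>D. cyclic_ds k A D \<and> D \<noteq> UNIV \<and> M \<subseteq> D \<longrightarrow> D = M)"

definition congruence :: "'a ck_algebra \<Rightarrow> ('a \<times> 'a) set \<Rightarrow> bool" where
  "congruence A \<theta> \<longleftrightarrow> equiv UNIV \<theta> \<and>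
     (\<forall>x y u v. (x, y) \<in> \<theta> \<longrightarrow> (u, v) \<in> \<theta> \<longrightarrow>
        (meet A x u, meet A y v) \<in> \<theta> \<and> (join A x u, join A y v) \<in> \<theta>) \<and>
     (\<forall>x y. (x, y) \<in> \<theta> \<longrightarrow>
        (neg A x, neg A y) \<in> \<theta> \<and> (pc A x, pc A y) \<in> \<theta> \<and> (tr A x, tr A y) \<in> \<theta>)"

definition nontrivial_alg :: "'a ck_algebra \<Rightarrow> bool" where
  "nontrivial_alg A \<longleftrightarrow> (\<exists>x y :: 'a. x \<noteq> y)"

definition subdirectly_irreducible :: "'a ck_algebra \<Rightarrow> bool" where
  "subdirectly_irreducible A \<longleftrightarrow> nontrivial_alg A \<and>
     \<Inter>{\<theta>. congruence A \<theta> \<and> \<theta> \<noteq> Id} \<noteq> Id"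

definition simple_alg :: "'a ck_algebra \<Rightarrow> bool" where
  "simple_alg A \<longleftrightarrow> nontrivial_alg A \<and>
     (\<forall>\<theta>. congruence A \<theta> \<longrightarrow> \<theta> = Id \<or> \<theta> = UNIV)"

end

theory Submission
  imports Defs
begin

text \<open>The cyclic implication is \<open>a \<rightharpoondown> b = \<sim>c(a) \<or> b\<close>, where
  \<open>c(a) = \<triangle>(t a) \<and> \<dots> \<and> \<triangle>(t\<^sup>k a)\<close> is the largest complemented \<open>t\<close>-invariant element
  below \<open>a\<close>. Hence the cyclic deductive systems are exactly the lattice filters closed under
  \<open>c\<close>. By Zorn's lemma every such filter avoiding \<open>a\<close> extends to one that is maximal with
  this property; it is prime on complemented \<open>t\<close>-invariant elements, and since \<open>c(x)\<close> and
  \<open>\<sim>c(x)\<close> are such elements it is in fact a maximal cyclic deductive system.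

  A filter \<open>F\<close> induces the congruence \<open>x \<equiv> y \<longleftrightarrow> x \<and> d = y \<and> d\<close> for some \<open>d \<in> F\<close>, and
  the 1-class of a congruence is a cyclic deductive system. A term \<open>e(x, y)\<close> built from
  \<open>\<triangle>\<close> and the pseudocomplement equals 1 exactly when \<open>x = y\<close>, so by (ii) the congruences
  of the maximal systems separate points. In a subdirectly irreducible algebra one of them is
  therefore the identity, which forces \<open>{1}\<close> to be maximal. Finally, the 1-class of a
  congruence identifying some \<open>x \<noteq> y\<close> contains \<open>e(x, y) \<noteq> 1\<close>, so it is everything and
  the congruence is total.\<close>

locale de_morgan_lattice =
  L: distrib_lattice mt le lt jn + B: bounded_lattice mt le lt jn bt tp
  for mt (infixl "\<sqinter>" 70) and le (infix "\<sqsubseteq>" 50) and lt and jn (infixl "\<squnion>" 65)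
    and bt ("\<zero>") and tp ("\<one>") +
  fixes N :: "'a \<Rightarrow> 'a"
  assumes neg_neg [simp]: "N (N x) = x"
    and neg_join: "N (x \<squnion> y) = N x \<sqinter> N y"
begin

lemma neg_meet: "N (x \<sqinter> y) = N x \<squnion> N y"
  using arg_cong [OF neg_join [of "N x" "N y"], of N] by simp

lemma neg_antimono: "x \<sqsubseteq> y \<Longrightarrow> N y \<sqsubseteq> N x"
  by (metis L.inf.absorb1 L.sup.cobounded2 neg_meet)

lemma neg_bot [simp]: "N \<zero> = \<one>"
  using neg_antimono [of \<zero> "N \<one>"] by (simp add: B.top_unique)

lemma neg_top [simp]: "N \<one> = \<zero>"
  by (metis neg_bot neg_neg)

definition complemented :: "'a \<Rightarrow> bool" where
  "complemented c \<longleftrightarrow> c \<sqinter> N c = \<zero>"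

lemma complemented_join_neg: "complemented c \<Longrightarrow> c \<squnion> N c = \<one>"
proof -
  assume "complemented c"
  then have "N (c \<sqinter> N c) = \<one>"
    by (simp add: complemented_def)
  then show ?thesis
    by (simp add: neg_meet L.sup.commute)
qed

lemma complemented_neg: "complemented c \<Longrightarrow> complemented (N c)"
  unfolding complemented_def by (simp add: L.inf.commute)

lemma complemented_bot: "complemented \<zero>"
  unfolding complemented_def by simp

lemma complemented_join:
  assumes "complemented a" and "complemented b"
  shows "complemented (a \<squnion> b)"
proof -
  have "(a \<squnion> b) \<sqinter> N (a \<squnion> b) = (a \<sqinter> (N a \<sqinter> N b)) \<squnion> (b \<sqinter> (N a \<sqinter> N b))"
    by (simp add: neg_join L.inf_sup_distrib2)
  also have "\<dots> = (a \<sqinter> N a \<sqinter> N b) \<squnion> (b \<sqinter> N b \<sqinter> N a)"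
    by (simp add: L.inf_aci)
  also have "\<dots> = \<zero>"
    using assms by (simp add: complemented_def)
  finally show ?thesis
    unfolding complemented_def .
qed

lemma complemented_le_iff: "complemented c \<Longrightarrow> N c \<squnion> y = \<one> \<longleftrightarrow> c \<sqsubseteq> y"
proof
  assume "complemented c" and "N c \<squnion> y = \<one>"
  then have "c = c \<sqinter> y"
    using L.inf_sup_distrib1 [of c "N c" y] by (simp add: complemented_def)
  then show "c \<sqsubseteq> y"
    by (metis L.inf_le2)
next
  assume "complemented c" and "c \<sqsubseteq> y"
  then have "\<one> \<sqsubseteq> N c \<squnion> y"
    using complemented_join_neg [of c] by (metis L.sup.commute L.sup_mono L.order_refl)
  then show "N c \<squnion> y = \<one>"
    by (simp add: B.top_unique)
qed

lemma neg_inf_eq_if_inf_eq: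
  assumes "complemented b" and "x \<sqinter> b = y \<sqinter> b"
  shows "N x \<sqinter> b = N y \<sqinter> b"
proof -
  have "N (z \<sqinter> b) \<sqinter> b = N z \<sqinter> b" for z
  proof -
    have "N (z \<sqinter> b) \<sqinter> b = (N z \<sqinter> b) \<squnion> (b \<sqinter> N b)"
      by (simp add: neg_meet L.inf_sup_distrib2 L.inf.commute [of "N b"])
    then show ?thesis
      using assms(1) by (simp add: complemented_def)
  qed
  then show ?thesis
    using arg_cong [OF assms(2), of "\<lambda>z. N z \<sqinter> b"] by simp
qed

definition meets :: "'a list \<Rightarrow> 'a" where
  "meets xs = foldr (\<sqinter>) xs \<one>"

definition joins :: "'a list \<Rightarrow> 'a" where
  "joins xs = foldr (\<squnion>) xs \<zero>"

lemma meets_le: "x \<in> set xs \<Longrightarrow> meets xs \<sqsubseteq> x"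
  unfolding meets_def by (induction xs) (auto intro: L.le_infI1 L.le_infI2)

lemma le_meets: "(\<And>x. x \<in> set xs \<Longrightarrow> z \<sqsubseteq> x) \<Longrightarrow> z \<sqsubseteq> meets xs"
  unfolding meets_def by (induction xs) (auto intro: L.le_infI)

lemma meets_cong_set: "set xs = set ys \<Longrightarrow> meets xs = meets ys"
proof (rule L.order.antisym)
  assume "set xs = set ys"
  then show "meets xs \<sqsubseteq> meets ys" and "meets ys \<sqsubseteq> meets xs"
    by (metis le_meets meets_le)+
qed

lemma meets_map_inf: "meets (map (\<lambda>x. f x \<sqinter> g x) xs) = meets (map f xs) \<sqinter> meets (map g xs)"
  unfolding meets_def by (induction xs) (simp_all add: L.inf.assoc L.inf.left_commute)

lemma neg_meets: "N (meets xs) = joins (map N xs)"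
  unfolding meets_def joins_def by (induction xs) (simp_all add: neg_meet)

lemma complemented_joins: "(\<And>x. x \<in> set xs \<Longrightarrow> complemented x) \<Longrightarrow> complemented (joins xs)"
  unfolding joins_def by (induction xs) (simp_all add: complemented_bot complemented_join)

end

locale mpM_lattice = de_morgan_lattice +
  fixes P :: "'a \<Rightarrow> 'a"
  assumes pseudocomp_inf [simp]: "x \<sqinter> P x = \<zero>"
    and pseudocomp_greatest: "x \<sqinter> y = \<zero> \<Longrightarrow> y \<sqsubseteq> P x"
    and join_neg_le_join_pseudocomp: "x \<squnion> N x \<sqsubseteq> x \<squnion> P x"
begin

lemma pseudocomp_antimono: "x \<sqsubseteq> y \<Longrightarrow> P y \<sqsubseteq> P x"
proof (rule pseudocomp_greatest)
  assume "x \<sqsubseteq> y"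
  then have "x \<sqinter> P y \<sqsubseteq> y \<sqinter> P y"
    by (rule L.inf_mono [OF _ L.order_refl])
  then show "x \<sqinter> P y = \<zero>"
    by (simp add: B.bot_unique)
qed

lemma pseudocomp_bot [simp]: "P \<zero> = \<one>"
  using pseudocomp_greatest [of \<zero> \<one>] by (simp add: B.top_unique)

lemma le_pseudocomp_pseudocomp: "x \<sqsubseteq> P (P x)"
  by (simp add: pseudocomp_greatest L.inf.commute)

lemma neg_le_join_pseudocomp: "N x \<sqsubseteq> x \<squnion> P x"
  using join_neg_le_join_pseudocomp by simp

lemma le_neg_join_pseudocomp_neg: "x \<sqsubseteq> N x \<squnion> P (N x)"
  using neg_le_join_pseudocomp [of "N x"] by simp

lemma stone_identity: "P x \<squnion> P (P x) = \<one>"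
proof -
  have "x \<squnion> P x \<sqsubseteq> P x \<squnion> P (P x)"
    by (rule L.le_supI) (simp_all add: L.le_supI2 le_pseudocomp_pseudocomp)
  with neg_le_join_pseudocomp have "N x \<sqsubseteq> P x \<squnion> P (P x)"
    by (rule L.order_trans)
  moreover have "N (P x) \<sqsubseteq> P x \<squnion> P (P x)"
    using join_neg_le_join_pseudocomp [of "P x"] by simp
  ultimately have "N x \<squnion> N (P x) \<sqsubseteq> P x \<squnion> P (P x)"
    by (rule L.le_supI)
  then show ?thesis
    by (simp add: B.top_unique flip: neg_meet)
qed

lemma pseudocomp_join: "P (x \<squnion> y) = P x \<sqinter> P y"
proof (rule L.order.antisym)
  show "P (x \<squnion> y) \<sqsubseteq> P x \<sqinter> P y"
    by (simp add: pseudocomp_antimono)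
  have "x \<sqinter> (P x \<sqinter> P y) = \<zero>"
    by (simp flip: L.inf.assoc)
  moreover have "y \<sqinter> (P x \<sqinter> P y) = P x \<sqinter> (y \<sqinter> P y)"
    by (rule L.inf.left_commute)
  ultimately show "P x \<sqinter> P y \<sqsubseteq> P (x \<squnion> y)"
    by (simp add: pseudocomp_greatest L.inf_sup_distrib2)
qed

lemma inf_pseudocomp_inf: "P (x \<sqinter> y) \<sqinter> y \<sqsubseteq> P x"
proof (rule pseudocomp_greatest)
  have "x \<sqinter> (P (x \<sqinter> y) \<sqinter> y) = x \<sqinter> y \<sqinter> P (x \<sqinter> y)"
    by (simp only: L.inf.commute [of "P (x \<sqinter> y)" y] L.inf.assoc)
  then show "x \<sqinter> (P (x \<sqinter> y) \<sqinter> y) = \<zero>"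
    by simp
qed

lemma pseudocomp_inf_eq: "P x \<sqinter> b = P (x \<sqinter> b) \<sqinter> b"
proof (rule L.order.antisym)
  show "P x \<sqinter> b \<sqsubseteq> P (x \<sqinter> b) \<sqinter> b"
    by (rule L.inf_mono [OF pseudocomp_antimono L.order_refl]) simp
  show "P (x \<sqinter> b) \<sqinter> b \<sqsubseteq> P x \<sqinter> b"
    using inf_pseudocomp_inf by simp
qed

lemma inf_neg_le_join_pseudocomp: "x \<sqinter> N x \<sqsubseteq> y \<squnion> P y"
proof -
  have "N x \<sqsubseteq> (x \<sqinter> y) \<squnion> P (x \<sqinter> y)"
    by (rule L.order_trans [OF neg_antimono [OF L.inf_le1] neg_le_join_pseudocomp])
  then have "x \<sqinter> N x \<sqsubseteq> x \<sqinter> ((x \<sqinter> y) \<squnion> P (x \<sqinter> y))"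
    by (simp add: L.le_infI2)
  also have "\<dots> = (x \<sqinter> y) \<squnion> (P (x \<sqinter> y) \<sqinter> x)"
    by (simp add: L.inf_sup_distrib1 L.inf_aci)
  also have "\<dots> \<sqsubseteq> y \<squnion> P y"
  proof (rule L.sup_mono)
    show "P (x \<sqinter> y) \<sqinter> x \<sqsubseteq> P y"
      using inf_pseudocomp_inf [of y x] by (simp add: L.inf.commute)
  qed simp
  finally show ?thesis .
qed

text \<open>The paper's \<open>\<triangle>x = \<sim>\<nabla>\<sim>x\<close>; conversely \<open>\<nabla>x = N (delta (N x))\<close>.\<close>
definition delta :: "'a \<Rightarrow> 'a" where
  "delta x = x \<sqinter> P (N x)"

lemma delta_le: "delta x \<sqsubseteq> x"
  by (simp add: delta_def)

lemma delta_inf: "delta (x \<sqinter> y) = delta x \<sqinter> delta y"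
  by (simp add: delta_def neg_meet pseudocomp_join L.inf_aci)

lemma delta_top [simp]: "delta \<one> = \<one>"
  by (simp add: delta_def)

lemma complemented_delta: "complemented (delta x)"
proof -
  have "x \<sqinter> N (P (N x)) \<sqsubseteq> N x"
    using neg_antimono [OF le_neg_join_pseudocomp_neg [of x]] by (simp add: neg_join)
  then have "x \<sqinter> N (P (N x)) \<sqinter> P (N x) \<sqsubseteq> N x \<sqinter> P (N x)"
    by (rule L.inf_mono [OF _ L.order_refl])
  then have "x \<sqinter> N (P (N x)) \<sqinter> P (N x) = \<zero>"
    by (simp add: B.bot_unique)
  moreover have "x \<sqinter> P (N x) \<sqinter> N x = \<zero>"
    using pseudocomp_inf [of "N x"] by (simp add: L.inf_aci)
  ultimately show ?thesis
    by (simp add: complemented_def delta_def neg_meet L.inf_sup_distrib1 L.inf_aci)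
qed

lemma complemented_delta_fixed: "complemented b \<Longrightarrow> delta b = b"
  unfolding complemented_def delta_def
  by (metis L.inf.absorb1 L.inf.commute pseudocomp_greatest)

lemma le_if_delta_le_pseudocomp_le:
  assumes "delta x \<sqsubseteq> y" and "P y \<sqsubseteq> P x"
  shows "x \<sqsubseteq> y"
proof -
  have x_split: "x = (x \<sqinter> N x) \<squnion> delta x"
    using L.inf.absorb1 [OF le_neg_join_pseudocomp_neg [of x]]
    by (simp add: delta_def L.inf_sup_distrib1)
  have "x \<sqinter> N x \<sqinter> P y \<sqsubseteq> x \<sqinter> P x"
    using assms(2) by (rule L.inf_mono [OF L.inf_le1])
  then have "x \<sqinter> N x \<sqinter> P y = \<zero>"
    by (simp add: B.bot_unique)
  then have "x \<sqinter> N x = x \<sqinter> N x \<sqinter> y"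
    using L.inf.absorb1 [OF inf_neg_le_join_pseudocomp [of x y]]
    by (simp add: L.inf_sup_distrib1)
  then have "x \<sqinter> N x \<sqsubseteq> y"
    by (metis L.inf_le2)
  with assms(1) x_split show ?thesis
    by (metis L.le_sup_iff)
qed

lemma pseudocomp_le_iff: "P y \<sqsubseteq> P x \<longleftrightarrow> P x \<squnion> P (P y) = \<one>"
proof
  assume "P y \<sqsubseteq> P x"
  then have "\<one> \<sqsubseteq> P x \<squnion> P (P y)"
    using stone_identity [of y] by (metis L.sup_mono L.order_refl)
  then show "P x \<squnion> P (P y) = \<one>"
    by (simp add: B.top_unique)
next
  assume "P x \<squnion> P (P y) = \<one>"
  then have "P y = P y \<sqinter> P x"
    using L.inf_sup_distrib1 [of "P y" "P x" "P (P y)"] by simp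
  then show "P y \<sqsubseteq> P x"
    by (metis L.inf_le2)
qed

text \<open>This term is what makes the variety semisimple.\<close>
definition eq_term :: "'a \<Rightarrow> 'a \<Rightarrow> 'a" where
  "eq_term x y = (N (delta x) \<squnion> y) \<sqinter> (N (delta y) \<squnion> x) \<sqinter> (P x \<squnion> P (P y)) \<sqinter> (P y \<squnion> P (P x))"

lemma eq_term_eq_top_iff: "eq_term x y = \<one> \<longleftrightarrow> x = y"
proof
  assume "eq_term x y = \<one>"
  then have "delta x \<sqsubseteq> y" "delta y \<sqsubseteq> x" "P y \<sqsubseteq> P x" "P x \<sqsubseteq> P y"
    by (simp_all add: eq_term_def B.inf_eq_top_iff complemented_delta
        flip: complemented_le_iff pseudocomp_le_iff)
  then show "x = y"
    by (simp add: L.order.antisym le_if_delta_le_pseudocomp_le)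
next
  assume "x = y"
  then show "eq_term x y = \<one>"
    by (simp add: eq_term_def complemented_delta complemented_le_iff delta_le
        flip: pseudocomp_le_iff)
qed

end

lemma image_Suc_cyclic:
  assumes "f (Suc k) = f 1" and "1 \<le> k"
  shows "(\<lambda>i. f (Suc i)) ` {1..k} = f ` {1..k}"
proof -
  have "{1..k} = insert 1 {2..k}" and "{2..Suc k} = insert (Suc k) {2..k}"
    using assms(2) by auto
  moreover have "(\<lambda>i. f (Suc i)) ` {1..k} = f ` {2..Suc k}"
    by (simp add: image_image [of f Suc, symmetric] numeral_2_eq_2)
  ultimately show ?thesis
    using assms(1) by simp
qed

locale Ck_lattice = mpM_lattice +
  fixes t :: "'a \<Rightarrow> 'a" and k :: nat
  assumes t_inf: "t (x \<sqinter> y) = t x \<sqinter> t y"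
    and t_neg: "t (N x) = N (t x)"
    and t_pseudocomp: "t (P x) = P (t x)"
    and t_top: "t \<one> = \<one>"
    and funpow_t_k: "(t ^^ k) x = x"
    and k_ge_1: "1 \<le> k"
begin

lemma funpow_t_top: "(t ^^ i) \<one> = \<one>"
  by (induction i) (simp_all add: t_top)

lemma funpow_t_inf: "(t ^^ i) (x \<sqinter> y) = (t ^^ i) x \<sqinter> (t ^^ i) y"
  by (induction i) (simp_all add: t_inf)

lemma t_delta: "t (delta x) = delta (t x)"
  by (simp add: delta_def t_inf t_neg t_pseudocomp)

lemma t_meets: "t (meets xs) = meets (map t xs)"
  unfolding meets_def by (induction xs) (simp_all add: t_top t_inf)

text \<open>The largest complemented \<open>t\<close>-invariant element below \<open>a\<close>; the cyclic implication
  is \<open>a \<rightharpoondown> b = N (core a) \<squnion> b\<close>.\<close>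
definition core :: "'a \<Rightarrow> 'a" where
  "core a = meets (map (\<lambda>i. delta ((t ^^ i) a)) [1..<Suc k])"

lemma core_le: "core a \<sqsubseteq> a"
proof -
  have "core a \<sqsubseteq> delta ((t ^^ k) a)"
    unfolding core_def by (rule meets_le) (use k_ge_1 in auto)
  then show ?thesis
    using delta_le [of a] by (simp add: funpow_t_k L.order_trans)
qed

lemma core_inf: "core (x \<sqinter> y) = core x \<sqinter> core y"
  by (simp add: core_def funpow_t_inf delta_inf meets_map_inf)

lemma core_mono: "x \<sqsubseteq> y \<Longrightarrow> core x \<sqsubseteq> core y"
  by (metis L.le_iff_inf core_inf)

lemma core_top: "core \<one> = \<one>"
  unfolding core_def by (rule B.top_unique [THEN iffD1], rule le_meets) (auto simp: funpow_t_top)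

lemma complemented_core: "complemented (core a)"
proof -
  have "complemented (N (core a))"
    unfolding core_def neg_meets
    by (rule complemented_joins) (auto intro: complemented_neg complemented_delta)
  then show ?thesis
    using complemented_neg by fastforce
qed

lemma t_core: "t (core a) = core a"
proof -
  let ?f = "\<lambda>i. delta ((t ^^ i) a)"
  have "t (core a) = meets (map (\<lambda>i. ?f (Suc i)) [1..<Suc k])"
    by (simp add: core_def t_meets t_delta o_def del: upt_Suc)
  also have "\<dots> = core a"
    unfolding core_def
  proof (rule meets_cong_set)
    have "?f (Suc k) = ?f 1"
      by (simp add: funpow_t_k)
    then show "set (map (\<lambda>i. ?f (Suc i)) [1..<Suc k]) = set (map ?f [1..<Suc k])"
      using image_Suc_cyclic [of ?f k] k_ge_1
      by (simp only: set_map set_upt atLeastLessThanSuc_atLeastAtMost)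
  qed
  finally show ?thesis .
qed

lemma core_fixed:
  assumes "complemented b" and "t b = b"
  shows "core b = b"
proof -
  have "(t ^^ i) b = b" for i
    using assms(2) by (induction i) simp_all
  then have "core b = meets (map (\<lambda>i. b) [1..<Suc k])"
    by (simp add: core_def complemented_delta_fixed assms(1))
  also have "\<dots> = b"
    using k_ge_1 by (intro L.order.antisym meets_le le_meets) auto
  finally show ?thesis .
qed

lemma join_neg_core_self: "N (core x) \<squnion> x = \<one>"
  by (simp add: complemented_le_iff complemented_core core_le)

definition cyclic_filter :: "'a set \<Rightarrow> bool" where
  "cyclic_filter F \<longleftrightarrow> \<one> \<in> F \<and> (\<forall>x y. x \<in> F \<longrightarrow> x \<sqsubseteq> y \<longrightarrow> y \<in> F)
     \<and> (\<forall>x y. x \<in> F \<longrightarrow> y \<in> F \<longrightarrow> x \<sqinter> y \<in> F) \<and> (\<forall>x. x \<in> F \<longrightarrow> core x \<in> F)"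

lemma cyclic_filter_iff_deductive:
  "cyclic_filter F \<longleftrightarrow> \<one> \<in> F \<and> (\<forall>x y. x \<in> F \<longrightarrow> N (core x) \<squnion> y \<in> F \<longrightarrow> y \<in> F)"
proof
  assume F: "cyclic_filter F"
  show "\<one> \<in> F \<and> (\<forall>x y. x \<in> F \<longrightarrow> N (core x) \<squnion> y \<in> F \<longrightarrow> y \<in> F)"
  proof (intro conjI allI impI)
    show "\<one> \<in> F"
      using F by (simp add: cyclic_filter_def)
    fix x y assume "x \<in> F" and "N (core x) \<squnion> y \<in> F"
    then have "core x \<sqinter> (N (core x) \<squnion> y) \<in> F"
      using F by (simp add: cyclic_filter_def)
    moreover have "core x \<sqinter> (N (core x) \<squnion> y) \<sqsubseteq> y"
      using complemented_core [of x]
      by (simp add: L.inf_sup_distrib1 complemented_def)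
    ultimately show "y \<in> F"
      using F by (auto simp: cyclic_filter_def)
  qed
next
  assume "\<one> \<in> F \<and> (\<forall>x y. x \<in> F \<longrightarrow> N (core x) \<squnion> y \<in> F \<longrightarrow> y \<in> F)"
  then have top: "\<one> \<in> F" and mp: "\<And>x y. x \<in> F \<Longrightarrow> N (core x) \<squnion> y \<in> F \<Longrightarrow> y \<in> F"
    by blast+
  have up: "y \<in> F" if "x \<in> F" and "x \<sqsubseteq> y" for x y
  proof (rule mp [OF \<open>x \<in> F\<close>])
    have "N (core x) \<squnion> y = \<one>"
      using join_neg_core_self [of x] \<open>x \<sqsubseteq> y\<close>
      by (metis B.top_unique L.order_refl L.sup_mono)
    then show "N (core x) \<squnion> y \<in> F"
      using top by simp
  qed
  have "x \<sqinter> y \<in> F" if "x \<in> F" and "y \<in> F" for x y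
  proof (rule mp [OF \<open>y \<in> F\<close>])
    have "N (core y) \<squnion> (x \<sqinter> y) = N (core y) \<squnion> x"
      by (simp add: L.sup_inf_distrib1 join_neg_core_self)
    then show "N (core y) \<squnion> (x \<sqinter> y) \<in> F"
      using up [OF \<open>x \<in> F\<close>] by simp
  qed
  moreover have "core x \<in> F" if "x \<in> F" for x
    using mp [OF that] complemented_join_neg [OF complemented_core, of x] top
    by (simp add: L.sup.commute)
  ultimately show "cyclic_filter F"
    using top up by (simp add: cyclic_filter_def)
qed

definition maximal_cyclic_filter :: "'a set \<Rightarrow> bool" where
  "maximal_cyclic_filter M \<longleftrightarrow> cyclic_filter M \<and> M \<noteq> UNIV \<and>
     (\<forall>F. cyclic_filter F \<and> F \<noteq> UNIV \<and> M \<subseteq> F \<longrightarrow> F = M)"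

lemma cyclic_filter_top: "cyclic_filter {\<one>}"
  by (auto simp: cyclic_filter_def core_top B.top_unique)

lemma cyclic_filter_Union_chain:
  assumes "C \<noteq> {}" and "chain\<^sub>\<subseteq> C" and "\<And>F. F \<in> C \<Longrightarrow> cyclic_filter F"
  shows "cyclic_filter (\<Union>C)"
  unfolding cyclic_filter_def
proof (intro conjI allI impI)
  show "\<one> \<in> \<Union>C"
    using assms(1,3) by (auto simp: cyclic_filter_def)
  fix x y assume "x \<in> \<Union>C" and "y \<in> \<Union>C"
  then obtain F G where "F \<in> C" "G \<in> C" "x \<in> F" "y \<in> G"
    by blast
  moreover have "F \<subseteq> G \<or> G \<subseteq> F"
    using assms(2) \<open>F \<in> C\<close> \<open>G \<in> C\<close> by (auto simp: chain_subset_def)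
  ultimately show "x \<sqinter> y \<in> \<Union>C"
    using assms(3) unfolding cyclic_filter_def by blast
qed (use assms(3) [unfolded cyclic_filter_def] in blast)+

lemma cyclic_filter_adjoin:
  assumes F: "cyclic_filter F" and b: "complemented b" "t b = b"
  shows "cyclic_filter {y. \<exists>x\<in>F. x \<sqinter> b \<sqsubseteq> y}"
  unfolding cyclic_filter_def
proof (intro conjI allI impI)
  show "\<one> \<in> {y. \<exists>x\<in>F. x \<sqinter> b \<sqsubseteq> y}"
    using F by (auto simp: cyclic_filter_def)
next
  fix y z assume "y \<in> {y. \<exists>x\<in>F. x \<sqinter> b \<sqsubseteq> y}" and "y \<sqsubseteq> z"
  then show "z \<in> {y. \<exists>x\<in>F. x \<sqinter> b \<sqsubseteq> y}"
    using L.order_trans by blast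
next
  fix y z assume "y \<in> {y. \<exists>x\<in>F. x \<sqinter> b \<sqsubseteq> y}" and "z \<in> {y. \<exists>x\<in>F. x \<sqinter> b \<sqsubseteq> y}"
  then obtain x x' where x: "x \<in> F" "x \<sqinter> b \<sqsubseteq> y" and x': "x' \<in> F" "x' \<sqinter> b \<sqsubseteq> z"
    by blast
  have "x \<sqinter> x' \<sqinter> b \<sqsubseteq> x \<sqinter> b" and "x \<sqinter> x' \<sqinter> b \<sqsubseteq> x' \<sqinter> b"
    by (intro L.inf_mono L.inf_le1 L.inf_le2 L.order_refl)+
  then have "x \<sqinter> x' \<sqinter> b \<sqsubseteq> y \<sqinter> z"
    using x(2) x'(2) by (blast intro: L.le_infI L.order_trans)
  moreover have "x \<sqinter> x' \<in> F"
    using F x(1) x'(1) by (simp add: cyclic_filter_def)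
  ultimately show "y \<sqinter> z \<in> {y. \<exists>x\<in>F. x \<sqinter> b \<sqsubseteq> y}"
    by blast
next
  fix y assume "y \<in> {y. \<exists>x\<in>F. x \<sqinter> b \<sqsubseteq> y}"
  then obtain x where "x \<in> F" and "x \<sqinter> b \<sqsubseteq> y"
    by blast
  then have "core x \<sqinter> b \<sqsubseteq> core y"
    using core_mono [of "x \<sqinter> b" y] by (simp add: core_inf core_fixed b)
  then show "core y \<in> {y. \<exists>x\<in>F. x \<sqinter> b \<sqsubseteq> y}"
    using F \<open>x \<in> F\<close> by (auto simp: cyclic_filter_def)
qed

context
  fixes a M
  assumes M_filter: "cyclic_filter M" and a_notin_M: "a \<notin> M"
    and M_maximal: "\<And>F. cyclic_filter F \<Longrightarrow> M \<subseteq> F \<Longrightarrow> a \<notin> F \<Longrightarrow> F = M"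
begin

lemma maximal_avoiding_prime:
  assumes b: "complemented b" "t b = b"
  shows "b \<in> M \<or> N b \<in> M"
proof (rule ccontr)
  have below_a: "\<exists>x\<in>M. x \<sqinter> c \<sqsubseteq> a" if "c \<notin> M" "complemented c" "t c = c" for c
  proof (rule ccontr)
    let ?F = "{y. \<exists>x\<in>M. x \<sqinter> c \<sqsubseteq> y}"
    assume "\<not> (\<exists>x\<in>M. x \<sqinter> c \<sqsubseteq> a)"
    then have "?F = M"
    proof (intro M_maximal)
      show "cyclic_filter ?F"
        using M_filter that(2,3) by (rule cyclic_filter_adjoin)
    qed (auto intro: L.inf_le1)
    moreover have "c \<in> ?F"
      using M_filter by (auto simp: cyclic_filter_def)
    ultimately show False
      using \<open>c \<notin> M\<close> by blast
  qed
  assume "\<not> (b \<in> M \<or> N b \<in> M)"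
  then obtain x x' where x: "x \<in> M" "x \<sqinter> b \<sqsubseteq> a" and x': "x' \<in> M" "x' \<sqinter> N b \<sqsubseteq> a"
    using below_a [of b] below_a [of "N b"] b complemented_neg by (auto simp: t_neg)
  have "x \<sqinter> x' \<sqinter> b \<sqsubseteq> x \<sqinter> b" and "x \<sqinter> x' \<sqinter> N b \<sqsubseteq> x' \<sqinter> N b"
    by (intro L.inf_mono L.inf_le1 L.inf_le2 L.order_refl)+
  then have "(x \<sqinter> x' \<sqinter> b) \<squnion> (x \<sqinter> x' \<sqinter> N b) \<sqsubseteq> a"
    using x(2) x'(2) by (blast intro: L.le_supI L.order_trans)
  moreover have "x \<sqinter> x' = (x \<sqinter> x' \<sqinter> b) \<squnion> (x \<sqinter> x' \<sqinter> N b)"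
    using complemented_join_neg [OF b(1)] L.inf_sup_distrib1 [of "x \<sqinter> x'" b "N b"] by simp
  ultimately have "x \<sqinter> x' \<sqsubseteq> a"
    by simp
  moreover have "x \<sqinter> x' \<in> M"
    using M_filter x(1) x'(1) by (simp add: cyclic_filter_def)
  ultimately have "a \<in> M"
    using M_filter by (auto simp: cyclic_filter_def)
  with a_notin_M show False ..
qed

lemma maximal_avoiding_maximal: "maximal_cyclic_filter M"
  unfolding maximal_cyclic_filter_def
proof (intro conjI allI impI)
  show "M \<noteq> UNIV"
    using a_notin_M by blast
  fix F assume F: "cyclic_filter F \<and> F \<noteq> UNIV \<and> M \<subseteq> F"
  show "F = M"
  proof (rule ccontr)
    assume "F \<noteq> M"
    then obtain x where "x \<in> F" "x \<notin> M"
      using F by blast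
    have "core x \<in> F"
      using F \<open>x \<in> F\<close> by (simp add: cyclic_filter_def)
    have "core x \<notin> M"
      using M_filter core_le [of x] \<open>x \<notin> M\<close> by (auto simp: cyclic_filter_def)
    then have "N (core x) \<in> F"
      using maximal_avoiding_prime [OF complemented_core t_core] F by blast
    with \<open>core x \<in> F\<close> have "core x \<sqinter> N (core x) \<in> F"
      using F by (simp add: cyclic_filter_def)
    then have "\<zero> \<in> F"
      using complemented_core [of x] by (simp add: complemented_def)
    then show False
      using F by (auto simp: cyclic_filter_def)
  qed
qed (fact M_filter)

end

lemma exists_maximal_cyclic_filter:
  assumes "cyclic_filter F" and "a \<notin> F"
  shows "\<exists>M. maximal_cyclic_filter M \<and> F \<subseteq> M \<and> a \<notin> M"
proof -
  let ?A = "{G. cyclic_filter G \<and> F \<subseteq> G \<and> a \<notin> G}"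
  have "\<exists>U\<in>?A. \<forall>G\<in>C. G \<subseteq> U" if "C \<in> chains ?A" for C
  proof (cases "C = {}")
    case True
    then show ?thesis
      using assms by blast
  next
    case False
    have "chain\<^sub>\<subseteq> C" and C: "C \<subseteq> ?A"
      using that by (simp_all add: chains_def)
    then have "cyclic_filter (\<Union>C)"
      using False by (intro cyclic_filter_Union_chain) auto
    moreover have "F \<subseteq> \<Union>C" and "a \<notin> \<Union>C"
      using C False by auto
    ultimately show ?thesis
      by blast
  qed
  then have "\<exists>M\<in>?A. \<forall>G\<in>?A. M \<subseteq> G \<longrightarrow> G = M"
    by (rule Zorn_Lemma2 [rule_format])
  then obtain M where M: "M \<in> ?A" and M_max: "\<forall>G\<in>?A. M \<subseteq> G \<longrightarrow> G = M"
    by (rule bexE)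
  have "maximal_cyclic_filter M"
  proof (rule maximal_avoiding_maximal)
    show "G = M" if "cyclic_filter G" "M \<subseteq> G" "a \<notin> G" for G
      using M M_max that by blast
  qed (use M in simp_all)
  with M show ?thesis
    by blast
qed

lemma cyclic_filter_eq_Inter_maximal:
  assumes "cyclic_filter F"
  shows "F = \<Inter>{M. maximal_cyclic_filter M \<and> F \<subseteq> M}"
proof
  show "\<Inter>{M. maximal_cyclic_filter M \<and> F \<subseteq> M} \<subseteq> F"
    using exists_maximal_cyclic_filter [OF assms] by blast
qed blast

lemma Inter_maximal_cyclic_filters: "\<Inter>{M. maximal_cyclic_filter M} = {\<one>}"
proof
  show "\<Inter>{M. maximal_cyclic_filter M} \<subseteq> {\<one>}"
    using exists_maximal_cyclic_filter [OF cyclic_filter_top] by blast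
  show "{\<one>} \<subseteq> \<Inter>{M. maximal_cyclic_filter M}"
    by (simp add: maximal_cyclic_filter_def cyclic_filter_def)
qed

definition ck_congruence :: "('a \<times> 'a) set \<Rightarrow> bool" where
  "ck_congruence \<theta> \<longleftrightarrow> equiv UNIV \<theta> \<and>
     (\<forall>x y u v. (x, y) \<in> \<theta> \<longrightarrow> (u, v) \<in> \<theta> \<longrightarrow>
        (x \<sqinter> u, y \<sqinter> v) \<in> \<theta> \<and> (x \<squnion> u, y \<squnion> v) \<in> \<theta>) \<and>
     (\<forall>x y. (x, y) \<in> \<theta> \<longrightarrow> (N x, N y) \<in> \<theta> \<and> (P x, P y) \<in> \<theta> \<and> (t x, t y) \<in> \<theta>)"

context
  fixes \<theta>
  assumes \<theta>: "ck_congruence \<theta>"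
begin

lemma congruence_refl: "(x, x) \<in> \<theta>"
  using \<theta> unfolding ck_congruence_def equiv_def refl_on_def by blast

lemma congruence_sym: "(x, y) \<in> \<theta> \<Longrightarrow> (y, x) \<in> \<theta>"
  using \<theta> unfolding ck_congruence_def equiv_def sym_def by blast

lemma congruence_trans: "(x, y) \<in> \<theta> \<Longrightarrow> (y, z) \<in> \<theta> \<Longrightarrow> (x, z) \<in> \<theta>"
  using \<theta> unfolding ck_congruence_def equiv_def trans_def by blast

lemma congruence_inf: "(x, y) \<in> \<theta> \<Longrightarrow> (u, v) \<in> \<theta> \<Longrightarrow> (x \<sqinter> u, y \<sqinter> v) \<in> \<theta>"
  and congruence_sup: "(x, y) \<in> \<theta> \<Longrightarrow> (u, v) \<in> \<theta> \<Longrightarrow> (x \<squnion> u, y \<squnion> v) \<in> \<theta>"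
  and congruence_neg: "(x, y) \<in> \<theta> \<Longrightarrow> (N x, N y) \<in> \<theta>"
  and congruence_pseudocomp: "(x, y) \<in> \<theta> \<Longrightarrow> (P x, P y) \<in> \<theta>"
  and congruence_t: "(x, y) \<in> \<theta> \<Longrightarrow> (t x, t y) \<in> \<theta>"
  using \<theta> unfolding ck_congruence_def by blast+

lemma congruence_meets:
  "(\<And>i. (f i, g i) \<in> \<theta>) \<Longrightarrow> (meets (map f is), meets (map g is)) \<in> \<theta>"
  unfolding meets_def by (induction "is") (simp_all add: congruence_refl congruence_inf)

lemma congruence_core: "(x, y) \<in> \<theta> \<Longrightarrow> (core x, core y) \<in> \<theta>"
proof -
  assume "(x, y) \<in> \<theta>"
  then have "((t ^^ i) x, (t ^^ i) y) \<in> \<theta>" for i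
    by (induction i) (simp_all add: congruence_t)
  then have "(delta ((t ^^ i) x), delta ((t ^^ i) y)) \<in> \<theta>" for i
    unfolding delta_def by (intro congruence_inf congruence_pseudocomp congruence_neg)
  then show ?thesis
    unfolding core_def by (rule congruence_meets)
qed

lemma congruence_eq_term: "(x, y) \<in> \<theta> \<Longrightarrow> (eq_term x y, \<one>) \<in> \<theta>"
proof -
  assume xy: "(x, y) \<in> \<theta>"
  then have yx: "(y, x) \<in> \<theta>"
    by (rule congruence_sym)
  have "(eq_term x y, eq_term x x) \<in> \<theta>"
    unfolding eq_term_def delta_def
    by (intro congruence_inf congruence_sup congruence_neg congruence_pseudocomp congruence_refl
        xy yx)
  then show ?thesis
    using eq_term_eq_top_iff [of x x] by simp
qed

lemma cyclic_filter_top_class: "cyclic_filter {x. (x, \<one>) \<in> \<theta>}"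
  unfolding cyclic_filter_def
proof (intro conjI allI impI; simp)
  show "(\<one>, \<one>) \<in> \<theta>"
    by (rule congruence_refl)
  fix x y assume x: "(x, \<one>) \<in> \<theta>"
  show "(y, \<one>) \<in> \<theta>" if "x \<sqsubseteq> y"
    using congruence_sup [OF congruence_refl [of y] x] that by (simp add: L.sup_absorb1)
  show "(x \<sqinter> y, \<one>) \<in> \<theta>" if "(y, \<one>) \<in> \<theta>"
    using congruence_inf [OF x that] by simp
  show "(core x, \<one>) \<in> \<theta>"
    using congruence_core [OF x] by (simp add: core_top)
qed

lemma congruence_eq_UNIV: "(\<zero>, \<one>) \<in> \<theta> \<Longrightarrow> \<theta> = UNIV"
proof -
  assume bot_top: "(\<zero>, \<one>) \<in> \<theta>"
  have bot_any: "(\<zero>, x) \<in> \<theta>" for x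
    using congruence_inf [OF congruence_refl [of x] bot_top] by simp
  have "(x, y) \<in> \<theta>" for x y
    using congruence_trans [OF congruence_sym [OF bot_any] bot_any] .
  then show "\<theta> = UNIV"
    by auto
qed

end

definition congruence_of :: "'a set \<Rightarrow> ('a \<times> 'a) set" where
  "congruence_of F = {(x, y). \<exists>d\<in>F. x \<sqinter> d = y \<sqinter> d}"

lemma mem_congruence_of_top_iff:
  assumes "cyclic_filter F"
  shows "(x, \<one>) \<in> congruence_of F \<longleftrightarrow> x \<in> F"
proof
  assume "(x, \<one>) \<in> congruence_of F"
  then obtain d where "d \<in> F" and "x \<sqinter> d = d"
    by (auto simp: congruence_of_def)
  moreover from this have "d \<sqsubseteq> x"
    using L.inf_le1 [of x d] by simp
  ultimately show "x \<in> F"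
    using assms by (auto simp: cyclic_filter_def)
next
  assume "x \<in> F"
  then show "(x, \<one>) \<in> congruence_of F"
    unfolding congruence_of_def by (auto intro!: bexI [of _ x])
qed

text \<open>Witnesses may be taken complemented and \<open>t\<close>-invariant, which makes the relation
  compatible with \<open>N\<close>, \<open>P\<close> and \<open>t\<close>.\<close>
lemma congruence_of_invariant_witness:
  assumes "cyclic_filter F" and "(x, y) \<in> congruence_of F"
  obtains b where "b \<in> F" "complemented b" "t b = b" "x \<sqinter> b = y \<sqinter> b"
proof -
  obtain d where "d \<in> F" and d: "x \<sqinter> d = y \<sqinter> d"
    using assms(2) by (auto simp: congruence_of_def)
  have "x \<sqinter> core d = x \<sqinter> d \<sqinter> core d"
    by (simp add: L.inf.assoc L.inf.absorb2 core_le)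
  also have "\<dots> = y \<sqinter> core d"
    by (simp add: d L.inf.assoc L.inf.absorb2 core_le)
  finally have "x \<sqinter> core d = y \<sqinter> core d" .
  moreover have "core d \<in> F"
    using assms(1) \<open>d \<in> F\<close> by (simp add: cyclic_filter_def)
  ultimately show ?thesis
    using that complemented_core t_core by blast
qed

lemma ck_congruence_congruence_of:
  assumes F: "cyclic_filter F"
  shows "ck_congruence (congruence_of F)"
  unfolding ck_congruence_def
proof (intro conjI allI impI)
  have inf_in: "d \<sqinter> e \<in> F" if "d \<in> F" "e \<in> F" for d e
    using F that by (simp add: cyclic_filter_def)
  have shared_witness: "\<exists>c\<in>F. x \<sqinter> c = y \<sqinter> c \<and> u \<sqinter> c = v \<sqinter> c"
    if xy: "(x, y) \<in> congruence_of F" and uv: "(u, v) \<in> congruence_of F" for x y u v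
  proof -
    obtain d e where "d \<in> F" "e \<in> F" and d: "x \<sqinter> d = y \<sqinter> d" and e: "u \<sqinter> e = v \<sqinter> e"
      using xy uv by (auto simp: congruence_of_def)
    have "x \<sqinter> (d \<sqinter> e) = y \<sqinter> (d \<sqinter> e)" and "u \<sqinter> (d \<sqinter> e) = v \<sqinter> (d \<sqinter> e)"
      using arg_cong [OF d, of "\<lambda>z. z \<sqinter> e"] arg_cong [OF e, of "\<lambda>z. z \<sqinter> d"]
      by (simp_all add: L.inf_aci)
    with inf_in [OF \<open>d \<in> F\<close> \<open>e \<in> F\<close>] show ?thesis
      by blast
  qed
  show "equiv UNIV (congruence_of F)"
  proof (rule equivI)
    show "refl (congruence_of F)"
      using F by (auto simp: refl_on_def congruence_of_def cyclic_filter_def)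
    show "sym (congruence_of F)"
      by (auto simp: sym_def congruence_of_def intro: sym)
    show "trans (congruence_of F)"
      by (rule transI) (use shared_witness in \<open>force simp: congruence_of_def\<close>)
  qed simp
  fix x y u v assume "(x, y) \<in> congruence_of F" and "(u, v) \<in> congruence_of F"
  then obtain c where "c \<in> F" and c: "x \<sqinter> c = y \<sqinter> c" "u \<sqinter> c = v \<sqinter> c"
    using shared_witness by blast
  have "(x \<sqinter> u) \<sqinter> c = (y \<sqinter> v) \<sqinter> c"
    using arg_cong2 [OF c, of "(\<sqinter>)"] by (simp add: L.inf_aci)
  moreover have "(x \<squnion> u) \<sqinter> c = (y \<squnion> v) \<sqinter> c"
    using arg_cong2 [OF c, of "(\<squnion>)"] by (simp add: L.inf_sup_distrib2)
  ultimately show "(x \<sqinter> u, y \<sqinter> v) \<in> congruence_of F" "(x \<squnion> u, y \<squnion> v) \<in> congruence_of F"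
    using \<open>c \<in> F\<close> by (auto simp: congruence_of_def)
next
  fix x y assume "(x, y) \<in> congruence_of F"
  then obtain b where b: "b \<in> F" "complemented b" "t b = b" and xy: "x \<sqinter> b = y \<sqinter> b"
    using F by (blast elim: congruence_of_invariant_witness)
  have "N x \<sqinter> b = N y \<sqinter> b"
    using b(2) xy by (rule neg_inf_eq_if_inf_eq)
  moreover have "P x \<sqinter> b = P y \<sqinter> b"
    using pseudocomp_inf_eq [of x b] pseudocomp_inf_eq [of y b] xy by simp
  moreover have "t x \<sqinter> b = t y \<sqinter> b"
    using arg_cong [OF xy, of t] b(3) by (simp add: t_inf)
  ultimately show "(N x, N y) \<in> congruence_of F" "(P x, P y) \<in> congruence_of F"
    "(t x, t y) \<in> congruence_of F"
    using b(1) by (auto simp: congruence_of_def)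
qed

lemma eq_if_congruent_mod_all_maximal:
  assumes "\<And>M. maximal_cyclic_filter M \<Longrightarrow> (x, y) \<in> congruence_of M"
  shows "x = y"
proof -
  have "eq_term x y \<in> M" if "maximal_cyclic_filter M" for M
  proof -
    have M: "cyclic_filter M"
      using that by (simp add: maximal_cyclic_filter_def)
    have "(eq_term x y, \<one>) \<in> congruence_of M"
      using congruence_eq_term [OF ck_congruence_congruence_of [OF M] assms [OF that]] .
    with M show ?thesis
      by (simp add: mem_congruence_of_top_iff)
  qed
  then have "eq_term x y = \<one>"
    using Inter_maximal_cyclic_filters by blast
  then show ?thesis
    by (simp add: eq_term_eq_top_iff)
qed

lemma maximal_cyclic_filter_top_if_monolith:
  assumes "\<Inter>{\<theta>. ck_congruence \<theta> \<and> \<theta> \<noteq> Id} \<noteq> Id"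
  shows "maximal_cyclic_filter {\<one>}"
proof -
  have "Id \<subseteq> \<Inter>{\<theta>. ck_congruence \<theta> \<and> \<theta> \<noteq> Id}"
    by (auto intro: congruence_refl)
  with assms obtain p q where pq: "(p, q) \<in> \<Inter>{\<theta>. ck_congruence \<theta> \<and> \<theta> \<noteq> Id}" and "p \<noteq> q"
    by auto
  have "\<exists>M. maximal_cyclic_filter M \<and> congruence_of M = Id"
  proof (rule ccontr)
    assume no_M: "\<nexists>M. maximal_cyclic_filter M \<and> congruence_of M = Id"
    have "(p, q) \<in> congruence_of M" if "maximal_cyclic_filter M" for M
    proof -
      have "ck_congruence (congruence_of M)"
        using that by (simp add: maximal_cyclic_filter_def ck_congruence_congruence_of)
      with no_M that show ?thesis
        using pq by blast
    qed
    then have "p = q"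
      by (rule eq_if_congruent_mod_all_maximal)
    with \<open>p \<noteq> q\<close> show False ..
  qed
  then obtain M where M: "maximal_cyclic_filter M" and "congruence_of M = Id"
    by blast
  then have "x \<in> M \<longleftrightarrow> x = \<one>" for x
    using mem_congruence_of_top_iff [of M x] by (simp add: maximal_cyclic_filter_def)
  with M show ?thesis
    by (metis singleton_iff subsetI subset_antisym)
qed

lemma simple_if_maximal_cyclic_filter_top:
  assumes "maximal_cyclic_filter {\<one>}" and \<theta>: "ck_congruence \<theta>"
  shows "\<theta> = Id \<or> \<theta> = UNIV"
proof (cases "{x. (x, \<one>) \<in> \<theta>} = UNIV")
  case True
  then show ?thesis
    using congruence_eq_UNIV [OF \<theta>] by blast
next
  case False
  have "\<And>G. cyclic_filter G \<Longrightarrow> G \<noteq> UNIV \<Longrightarrow> {\<one>} \<subseteq> G \<Longrightarrow> G = {\<one>}"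
    using assms(1) by (simp add: maximal_cyclic_filter_def)
  then have top_class: "{x. (x, \<one>) \<in> \<theta>} = {\<one>}"
    using cyclic_filter_top_class [OF \<theta>] False congruence_refl [OF \<theta>] by blast
  have "x = y" if "(x, y) \<in> \<theta>" for x y
  proof -
    have "eq_term x y \<in> {x. (x, \<one>) \<in> \<theta>}"
      using congruence_eq_term [OF \<theta> that] by simp
    then show ?thesis
      by (simp add: top_class eq_term_eq_top_iff)
  qed
  then have "\<theta> = Id"
    using congruence_refl [OF \<theta>] by auto
  then show ?thesis ..
qed

end

context
  fixes A :: "'a ck_algebra"
  assumes bdl: "bdl A"
begin

lemma bdl_meet_assoc: "meet A (meet A x y) z = meet A x (meet A y z)"
  and bdl_join_assoc: "join A (join A x y) z = join A x (join A y z)"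
  and bdl_meet_comm: "meet A x y = meet A y x"
  and bdl_join_comm: "join A x y = join A y x"
  and bdl_meet_absorb: "meet A x (join A x y) = x"
  and bdl_join_absorb: "join A x (meet A x y) = x"
  and bdl_distrib: "meet A x (join A y z) = join A (meet A x y) (meet A x z)"
  and bdl_join_zero: "join A x (zero A) = x"
  and bdl_meet_one: "meet A x (one A) = x"
  using bdl unfolding bdl_def by (elim conjE; fast)+

lemma bdl_meet_idem: "meet A x x = x"
  using bdl_meet_absorb [of x "meet A x x"] by (simp only: bdl_join_absorb)

lemma bdl_join_distrib: "join A x (meet A y z) = meet A (join A x y) (join A x z)"
proof -
  have "meet A (join A x y) (join A x z) = join A (meet A (join A x y) x) (meet A (join A x y) z)"
    by (rule bdl_distrib)
  also have "meet A (join A x y) x = x"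
    by (simp only: bdl_meet_comm [of "join A x y" x] bdl_meet_absorb)
  also have "meet A (join A x y) z = join A (meet A z x) (meet A z y)"
    by (simp only: bdl_meet_comm [of "join A x y" z] bdl_distrib)
  also have "join A x (join A (meet A z x) (meet A z y)) = join A (join A x (meet A x z)) (meet A y z)"
    by (simp only: bdl_join_assoc bdl_meet_comm [of z])
  finally show ?thesis
    by (simp only: bdl_join_absorb)
qed

lemma bdl_distrib_lattice:
  "class.distrib_lattice (meet A) (leq A) (\<lambda>x y. leq A x y \<and> x \<noteq> y) (join A)"
proof unfold_locales
  fix x y z
  have antisym: "leq A x y \<Longrightarrow> leq A y x \<Longrightarrow> x = y" for x y
    unfolding leq_def using bdl_meet_comm [of x y] by simp
  show "(leq A x y \<and> x \<noteq> y) = (leq A x y \<and> \<not> leq A y x)"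
    using antisym [of x y] by (auto simp: leq_def bdl_meet_idem)
  show "leq A x y \<Longrightarrow> leq A y x \<Longrightarrow> x = y"
    by (rule antisym)
  show "leq A x x"
    by (simp add: leq_def bdl_meet_idem)
  show "leq A x y \<Longrightarrow> leq A y z \<Longrightarrow> leq A x z"
    unfolding leq_def using bdl_meet_assoc [of x y z] by simp
  show "leq A (meet A x y) x"
    unfolding leq_def
    by (simp only: bdl_meet_comm [of "meet A x y" x] bdl_meet_assoc [symmetric] bdl_meet_idem)
  show "leq A (meet A x y) y"
    unfolding leq_def by (simp only: bdl_meet_assoc bdl_meet_idem)
  show "leq A x y \<Longrightarrow> leq A x z \<Longrightarrow> leq A x (meet A y z)"
    unfolding leq_def using bdl_meet_assoc [of x y z] by simp
  show "leq A x (join A x y)"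
    unfolding leq_def by (rule bdl_meet_absorb)
  show "leq A y (join A x y)"
    unfolding leq_def by (simp only: bdl_join_comm [of x y] bdl_meet_absorb)
  show "leq A y x \<Longrightarrow> leq A z x \<Longrightarrow> leq A (join A y z) x"
    unfolding leq_def
    by (simp only: bdl_meet_comm [of "join A y z" x] bdl_distrib bdl_meet_comm [of x])
  show "join A x (meet A y z) = meet A (join A x y) (join A x z)"
    by (rule bdl_join_distrib)
qed

lemma bdl_bounded_lattice:
  "class.bounded_lattice (meet A) (leq A) (\<lambda>x y. leq A x y \<and> x \<noteq> y) (join A) (zero A) (one A)"
proof -
  interpret distrib_lattice "meet A" "leq A" "\<lambda>x y. leq A x y \<and> x \<noteq> y" "join A"
    by (rule bdl_distrib_lattice)
  show ?thesis
  proof unfold_locales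
    fix x
    show "leq A (zero A) x"
      using bdl_meet_absorb [of "zero A" x] by (simp add: leq_def bdl_join_comm [of "zero A"] bdl_join_zero)
    show "leq A x (one A)"
      by (simp add: leq_def bdl_meet_one)
  qed
qed

end

lemma Ck_lattice_if_Ck_alg:
  assumes "Ck_alg k A" and "1 \<le> k"
  shows "Ck_lattice (meet A) (leq A) (\<lambda>x y. leq A x y \<and> x \<noteq> y) (join A) (zero A) (one A)
    (neg A) (pc A) (tr A) k"
proof -
  have "mpM_alg A" and t: "mpM_automorphism A (tr A)" and "tr A ^^ k = id"
    using assms(1) by (simp_all add: Ck_alg_def)
  then have "de_morgan_alg A" and "is_pseudocomplement A"
    and ax: "\<forall>x. leq A (join A x (neg A x)) (join A x (pc A x))"
    by (simp_all add: mpM_alg_def)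
  then have "bdl A"
    by (simp add: de_morgan_alg_def)
  show ?thesis
    using bdl_distrib_lattice [OF \<open>bdl A\<close>] bdl_bounded_lattice [OF \<open>bdl A\<close>]
      \<open>de_morgan_alg A\<close> \<open>is_pseudocomplement A\<close> ax t \<open>tr A ^^ k = id\<close> assms(2)
    unfolding Ck_lattice_def Ck_lattice_axioms_def mpM_lattice_def mpM_lattice_axioms_def
      de_morgan_lattice_def de_morgan_lattice_axioms_def de_morgan_alg_def is_pseudocomplement_def
      mpM_automorphism_def
    by simp
qed

theorem lemma3p3:
  fixes k :: nat and A :: "'a ck_algebra"
  assumes "k \<ge> 1" and "Ck_alg k A"
  shows "(\<forall>D. cyclic_ds k A D \<longrightarrow>
            (\<exists>\<M>. (\<forall>M\<in>\<M>. maximal_cyclic_ds k A M) \<and> D = \<Inter>\<M>))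
       \<and> \<Inter>{M. maximal_cyclic_ds k A M} = {one A}
       \<and> (subdirectly_irreducible A \<longrightarrow> simple_alg A)"
proof -
  interpret Ck_lattice "meet A" "leq A" "\<lambda>x y. leq A x y \<and> x \<noteq> y" "join A" "zero A" "one A"
    "neg A" "pc A" "tr A" k
    using Ck_lattice_if_Ck_alg [OF assms(2,1)] .
  have "cimp k A x y = join A (neg A (core x)) y" for x y
    by (simp add: cimp_def bigjoin_def core_def neg_meets joins_def nabla_def delta_def o_def)
  then have cyclic_ds_iff: "cyclic_ds k A = cyclic_filter"
    by (simp add: fun_eq_iff cyclic_ds_def cyclic_filter_iff_deductive)
  have maximal_iff: "maximal_cyclic_ds k A = maximal_cyclic_filter"
    by (simp add: fun_eq_iff maximal_cyclic_ds_def maximal_cyclic_filter_def cyclic_ds_iff)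
  have congruence_iff: "congruence A = ck_congruence"
    by (simp add: fun_eq_iff congruence_def ck_congruence_def)
  show ?thesis
  proof (intro conjI allI impI)
    fix D assume "cyclic_ds k A D"
    then have "D = \<Inter>{M. maximal_cyclic_filter M \<and> D \<subseteq> M}"
      by (intro cyclic_filter_eq_Inter_maximal) (simp add: cyclic_ds_iff)
    moreover have "\<forall>M\<in>{M. maximal_cyclic_filter M \<and> D \<subseteq> M}. maximal_cyclic_ds k A M"
      by (simp add: maximal_iff)
    ultimately show "\<exists>\<M>. (\<forall>M\<in>\<M>. maximal_cyclic_ds k A M) \<and> D = \<Inter>\<M>"
      by blast
  next
    show "\<Inter>{M. maximal_cyclic_ds k A M} = {one A}"
      by (simp add: maximal_iff Inter_maximal_cyclic_filters)
  next
    assume "subdirectly_irreducible A"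
    then show "simple_alg A"
      using maximal_cyclic_filter_top_if_monolith simple_if_maximal_cyclic_filter_top
      by (simp add: subdirectly_irreducible_def simple_alg_def congruence_iff)
  qed
qed

end
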